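(* For every environment $\Gamma=(c,\mu)$ (as described in the context), $$\mathbf{\Pi}(\Gamma)=\left\{(\pi_b,\pi_s)\in\mathbb{R}^2:\ \pi_b\ge 0,\ \ \pi_s\ge \underline{\pi}_s(\Gamma),\ \ \pi_b+\pi_s\le S(\Gamma)\right\}.$$
   Context: Environment: $V\subset\mathbb{R}$ is compact with $\underline v=\min V<\max V=\overline v$; $\mu$ is a probability measure on $\mathbb{R}$ with support $V$; $c:V\to\mathbb{R}$ is continuous with $v-c(v)\ge 0$ for all $v\in V$ and $\mathbb{E}_\mu[v-c(v)]>0$. Write $\Gamma=(c,\mu)$; all expectations are under $\mu$. Let $S(\Gamma)=\mathbb{E}[v-c(v)]$ and $\underline{\pi}_s(\Gamma)=\max\{\underline v-\mathbb{E}[c(v)],0\}$. An information structure $\tau$ consists of complete separable metric spaces $T_s,T_b$ (with Borel $\sigma$-algebras) and a probability distribution $P$ on $T_s\times T_b\times V$ whose marginal on $V$ is $\mu$. Game $(\Gamma,\tau)$: $(t_s,t_b,v)\sim P$ is drawn; Seller privately observes $t_s$ and posts a price $p\in\mathbb{R}$; Buyer privately observes $t_b$, sees $p$, and accepts or rejects. If Buyer accepts, payoffs are $v-p$ (Buyer) and $p-c(v)$ (Seller); otherwise both get $0$. Seller's strategy is a distributional strategy $\sigma$: a joint distribution on $\mathbb{R}\times T_s$ whose $T_s$-marginal equals the marginal of $P$ on $T_s$, with conditional $\sigma(\cdot|t_s)$. Buyer's strategy is a measurable $\alpha:\mathbb{R}\times T_b\to[0,1]$ (probability of accepting). Buyer's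 beliefs are $\nu(\cdot|p,t_b)\in\Delta(V)$. Ex ante payoffs are $\pi_b=\int (v-p)\alpha(p,t_b)\sigma(dp|t_s)P(dt_s,dt_b,dv)$ and $\pi_s=\int (p-c(v))\alpha(p,t_b)\sigma(dp|t_s)P(dt_s,dt_b,dv)$. A weak perfect Bayesian equilibrium (wPBE) is $(\sigma,\alpha,\nu)$ such that: (1) for every $(p,t_b)$, $\alpha(p,t_b)=1$ if $\mathbb{E}_{\nu(\cdot|p,t_b)}[v]>p$ and $\alpha(p,t_b)=0$ if $\mathbb{E}_{\nu(\cdot|p,t_b)}[v]<p$; (2) $\sigma$ maximizes Seller's ex ante payoff given $\alpha$ over all distributional strategies; (3) for every measurable $D\subseteq\mathbb{R}\times T_s\times T_b\times V$, $\int_D\nu(dv|p,t_b)\sigma(dp|t_s)P(dt_s,dt_b,V)=\int_D\sigma(dp|t_s)P(dt_s,dt_b,dv)$. $\Pi(\Gamma,\tau)$ is the set of payoff pairs $(\pi_b,\pi_s)$ of wPBE of $(\Gamma,\tau)$, and $\mathbf{\Pi}(\Gamma)=\bigcup_\tau\Pi(\Gamma,\tau)$ over all information structures. *)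

theory Defs
  imports "HOL-Probability.Probability"
begin

definition support_of :: "real measure \<Rightarrow> real set" where
  "support_of \<mu> = {x. \<forall>U. open U \<and> x \<in> U \<longrightarrow> emeasure \<mu> U > 0}"

text \<open>The cost function is only given on V; outside V it is set to 0 (irrelevant,
since all relevant distributions are concentrated on V).\<close>
definition costV :: "real set \<Rightarrow> (real \<Rightarrow> real) \<Rightarrow> real \<Rightarrow> real" where
  "costV V c v = (if v \<in> V then c v else 0)"

definition surplus :: "real measure \<Rightarrow> real set \<Rightarrow> (real \<Rightarrow> real) \<Rightarrow> real" where
  "surplus \<mu> V c = (\<integral>v. v - costV V c v \<partial>\<mu>)"

definition seller_floor :: "real measure \<Rightarrow> real set \<Rightarrow> (real \<Rightarrow> real) \<Rightarrow> real" where
  "seller_floor \<mu> V c = max (Inf V - (\<integral>v. costV V c v \<partial>\<mu>)) 0"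

definition target_set :: "real measure \<Rightarrow> real set \<Rightarrow> (real \<Rightarrow> real) \<Rightarrow> (real \<times> real) set" where
  "target_set \<mu> V c = {(pb, ps). pb \<ge> 0 \<and> ps \<ge> seller_floor \<mu> V c \<and> pb + ps \<le> surplus \<mu> V c}"

definition info_structure ::
  "real measure \<Rightarrow> ('ts::topological_space \<times> 'tb::topological_space \<times> real) measure \<Rightarrow> bool" where
  "info_structure \<mu> P \<longleftrightarrow> prob_space P \<and> sets P = sets borel \<and>
     distr P borel (\<lambda>x. snd (snd x)) = \<mu>"

definition seller_strategy :: "('ts::topological_space \<Rightarrow> real measure) \<Rightarrow> bool" where
  "seller_strategy \<sigma> \<longleftrightarrow> \<sigma> \<in> measurable borel (prob_algebra borel)"

definition joint ::
  "('ts::topological_space \<times> 'tb::topological_space \<times> real) measure \<Rightarrow> ('ts \<Rightarrow> real measure)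
    \<Rightarrow> (real \<times> 'ts \<times> 'tb \<times> real) measure" where
  "joint P \<sigma> = P \<bind> (\<lambda>(ts, tb, v). \<sigma> ts \<bind> (\<lambda>p. return borel (p, ts, tb, v)))"

definition belief_joint ::
  "('ts::topological_space \<times> 'tb::topological_space \<times> real) measure \<Rightarrow> ('ts \<Rightarrow> real measure)
    \<Rightarrow> (real \<times> 'tb \<Rightarrow> real measure) \<Rightarrow> (real \<times> 'ts \<times> 'tb \<times> real) measure" where
  "belief_joint P \<sigma> \<nu> = P \<bind> (\<lambda>(ts, tb, v). \<sigma> ts \<bind>
      (\<lambda>p. \<nu> (p, tb) \<bind> (\<lambda>w. return borel (p, ts, tb, w))))"

definition seller_integrand ::
  "real set \<Rightarrow> (real \<Rightarrow> real) \<Rightarrow> (real \<times> 'tb \<Rightarrow> real) \<Rightarrow> real \<times> 'ts \<times> 'tb \<times> real \<Rightarrow> real" where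
  "seller_integrand V c \<alpha> = (\<lambda>(p, ts, tb, v). (p - costV V c v) * \<alpha> (p, tb))"

definition buyer_integrand ::
  "(real \<times> 'tb \<Rightarrow> real) \<Rightarrow> real \<times> 'ts \<times> 'tb \<times> real \<Rightarrow> real" where
  "buyer_integrand \<alpha> = (\<lambda>(p, ts, tb, v). (v - p) * \<alpha> (p, tb))"

definition seller_payoff where
  "seller_payoff V c P \<sigma> \<alpha> = integral\<^sup>L (joint P \<sigma>) (seller_integrand V c \<alpha>)"

definition buyer_payoff where
  "buyer_payoff P \<sigma> \<alpha> = integral\<^sup>L (joint P \<sigma>) (buyer_integrand \<alpha>)"

text \<open>Deviations with non-integrable payoff are excluded: their payoff is -\<infinity> (the
positive part of the Seller's payoff is bounded), so they are never profitable.\<close>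
definition wPBE ::
  "real set \<Rightarrow> (real \<Rightarrow> real) \<Rightarrow> ('ts::topological_space \<times> 'tb::topological_space \<times> real) measure
    \<Rightarrow> ('ts \<Rightarrow> real measure) \<Rightarrow> (real \<times> 'tb \<Rightarrow> real) \<Rightarrow> (real \<times> 'tb \<Rightarrow> real measure) \<Rightarrow> bool" where
  "wPBE V c P \<sigma> \<alpha> \<nu> \<longleftrightarrow>
     seller_strategy \<sigma> \<and>
     \<alpha> \<in> borel_measurable borel \<and> (\<forall>x. 0 \<le> \<alpha> x \<and> \<alpha> x \<le> 1) \<and>
     \<nu> \<in> measurable borel (prob_algebra borel) \<and> (\<forall>x. measure (\<nu> x) V = 1) \<and>
     (\<forall>p tb. ((\<integral>v. v \<partial>\<nu> (p, tb)) > p \<longrightarrow> \<alpha> (p, tb) = 1) \<and>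
             ((\<integral>v. v \<partial>\<nu> (p, tb)) < p \<longrightarrow> \<alpha> (p, tb) = 0)) \<and>
     integrable (joint P \<sigma>) (seller_integrand V c \<alpha>) \<and>
     (\<forall>\<sigma>'. seller_strategy \<sigma>' \<and> integrable (joint P \<sigma>') (seller_integrand V c \<alpha>) \<longrightarrow>
        seller_payoff V c P \<sigma>' \<alpha> \<le> seller_payoff V c P \<sigma> \<alpha>) \<and>
     belief_joint P \<sigma> \<nu> = joint P \<sigma>"

definition eq_payoffs ::
  "real set \<Rightarrow> (real \<Rightarrow> real) \<Rightarrow> ('ts::topological_space \<times> 'tb::topological_space \<times> real) measure
    \<Rightarrow> (real \<times> real) set" where
  "eq_payoffs V c P = {(buyer_payoff P \<sigma> \<alpha>, seller_payoff V c P \<sigma> \<alpha>) | \<sigma> \<alpha> \<nu>. wPBE V c P \<sigma> \<alpha> \<nu>}"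

text \<open>Union over information structures, with type spaces T_s = T_b = \<real>
(every Polish space is Borel isomorphic to a Borel subset of \<real>).\<close>
definition all_eq_payoffs :: "real measure \<Rightarrow> real set \<Rightarrow> (real \<Rightarrow> real) \<Rightarrow> (real \<times> real) set" where
  "all_eq_payoffs \<mu> V c = \<Union>{eq_payoffs V c P | P :: (real \<times> real \<times> real) measure. info_structure \<mu> P}"

end

theory Submission
  imports Defs
begin

(*
  The Buyer accepts with probability at most
  one and v - c(v) >= 0 on V, so the total payoff E[alpha (v - c v)] is at most the surplus S.
  The Buyer's beliefs are concentrated on V, so a constant price p < min V is accepted by every
  Buyer type; deviating to it earns the Seller p - E c, and deviating to a price above max V earns
  0, which gives the Seller's floor. By belief consistency the Buyer's payoff equals
  E[alpha (m - p)], where m is his posterior mean of v, and this is nonnegative because he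
  accepts only when m >= p.

  Conversely, every point (pi_b, pi_s) of the triangle is attained without information. The
  Seller mixes between the price E c + pi_s, which is accepted, and E v, at which the Buyer is
  indifferent and accepts with probability pi_s / S; every other price above min V is met with
  the pessimistic belief v = min V and rejected. No price earns the Seller more than pi_s, and the
  mixing weight gives the Buyer the share pi_b of the remaining surplus S - pi_s.
*)

lemma measurable_fst_borel[measurable]:
  "fst \<in> (borel :: ('a::second_countable_topology \<times> 'b::second_countable_topology) measure) \<rightarrow>\<^sub>M borel"
  by (simp add: borel_prod[symmetric])

lemma measurable_snd_borel[measurable]:
  "snd \<in> (borel :: ('a::second_countable_topology \<times> 'b::second_countable_topology) measure) \<rightarrow>\<^sub>M borel"
  by (simp add: borel_prod[symmetric])

lemma integral_bind_prob_algebra: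
  fixes f :: "'b \<Rightarrow> real"
  assumes M: "M \<in> space (prob_algebra N)" and K: "K \<in> N \<rightarrow>\<^sub>M prob_algebra L"
    and f: "f \<in> borel_measurable L" and f_bound: "\<And>x. \<bar>f x\<bar> \<le> B"
  shows "integral\<^sup>L (M \<bind> K) f = (\<integral>x. integral\<^sup>L (K x) f \<partial>M)"
proof -
  have "prob_space M" "sets M = sets N"
    using M by (auto simp: space_prob_algebra)
  moreover from this have K': "K \<in> M \<rightarrow>\<^sub>M subprob_algebra L"
    using measurable_prob_algebraD[OF K] by (simp cong: measurable_cong_sets)
  ultimately show ?thesis
    by (intro integral_bind[OF f _ K' _ AE_I2, where B=B and B'=1])
       (auto simp: f_bound prob_space.finite_measure
             intro: subprob_space.subprob_emeasure_le_1 subprob_space_kernel[OF K'])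
qed

lemma integrable_AE_bounded:
  fixes f :: "'a::topological_space \<Rightarrow> real"
  assumes "M \<in> space (prob_algebra borel)" "f \<in> borel_measurable borel" "AE x in M. \<bar>f x\<bar> \<le> B"
  shows "integrable M f"
proof -
  interpret prob_space M
    using assms(1) by (simp add: space_prob_algebra)
  show ?thesis
    using assms
    by (intro integrable_const_bound[where B=B]) (auto simp: space_prob_algebra cong: measurable_cong_sets)
qed

lemma integrable_add_iff_left:
  fixes f g :: "'a \<Rightarrow> real"
  assumes "integrable M g"
  shows "integrable M (\<lambda>x. f x + g x) \<longleftrightarrow> integrable M f"
  using Bochner_Integration.integrable_diff[of M "\<lambda>x. f x + g x" g]
    Bochner_Integration.integrable_add[of M f g] assms
  by auto

lemma AE_in_support_of:
  assumes "sets \<mu> = sets borel"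
  shows "AE x in \<mu>. x \<in> support_of \<mu>"
proof -
  define N where "N = {U. open U \<and> emeasure \<mu> U = 0}"
  obtain N' where N': "N' \<subseteq> N" "countable N'" "\<Union>N' = \<Union>N"
    using Lindelof[of N] unfolding N_def by blast
  have "(\<Union>U\<in>N'. U) \<in> null_sets \<mu>"
    using N' assms by (intro null_sets_UN') (auto simp: N_def null_sets_def)
  moreover have "{x \<in> space \<mu>. x \<notin> support_of \<mu>} \<subseteq> (\<Union>U\<in>N'. U)"
    using N'(3) by (auto simp: support_of_def N_def not_less)
  ultimately show ?thesis
    by (rule AE_I')
qed

definition two_point :: "real \<Rightarrow> real \<Rightarrow> real \<Rightarrow> real measure" where
  "two_point l x y = distr (measure_pmf (bernoulli_pmf l)) borel (\<lambda>b. if b then x else y)"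

context
  fixes l x y :: real
  assumes l: "0 \<le> l" "l \<le> 1"
begin

lemma two_point_in_prob_algebra: "two_point l x y \<in> space (prob_algebra borel)"
  unfolding two_point_def
  by (auto simp: space_prob_algebra intro!: prob_space.prob_space_distr prob_space_measure_pmf)

lemma AE_two_point: "AE p in two_point l x y. p = x \<or> p = y"
  unfolding two_point_def by (subst AE_distr_iff) auto

lemma
  fixes f :: "real \<Rightarrow> real"
  assumes f: "f \<in> borel_measurable borel"
  shows integrable_two_point: "integrable (two_point l x y) f"
    and integral_two_point: "(\<integral>p. f p \<partial>two_point l x y) = l * f x + (1 - l) * f y"
  unfolding two_point_def using f l
  by (auto simp: integrable_distr_eq integral_distr intro!: integrable_measure_pmf_finite)

end

definition price_kernel ::
  "('ts \<Rightarrow> real measure) \<Rightarrow> 'ts::topological_space \<times> 'tb::topological_space \<times> real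
    \<Rightarrow> (real \<times> 'ts \<times> 'tb \<times> real) measure" where
  "price_kernel \<sigma> y = \<sigma> (fst y) \<bind> (\<lambda>p. return borel (p, y))"

definition belief_kernel ::
  "('ts \<Rightarrow> real measure) \<Rightarrow> (real \<times> 'tb \<Rightarrow> real measure) \<Rightarrow>
    'ts::topological_space \<times> 'tb::topological_space \<times> real \<Rightarrow> (real \<times> 'ts \<times> 'tb \<times> real) measure" where
  "belief_kernel \<sigma> \<nu> y =
     \<sigma> (fst y) \<bind> (\<lambda>p. \<nu> (p, fst (snd y)) \<bind> (\<lambda>w. return borel (p, fst y, fst (snd y), w)))"

lemma joint_eq_bind_price_kernel: "joint P \<sigma> = P \<bind> price_kernel \<sigma>"
  unfolding joint_def price_kernel_def by (simp add: split_beta')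

lemma belief_joint_eq_bind_belief_kernel: "belief_joint P \<sigma> \<nu> = P \<bind> belief_kernel \<sigma> \<nu>"
  unfolding belief_joint_def belief_kernel_def by (simp add: split_beta')

context
  fixes \<sigma> :: "'ts::second_countable_topology \<Rightarrow> real measure"
  assumes \<sigma>[measurable]: "\<sigma> \<in> borel \<rightarrow>\<^sub>M prob_algebra borel"
begin

lemma measurable_price_kernel[measurable]:
  "price_kernel \<sigma> \<in>
    (borel :: ('ts \<times> 'tb::second_countable_topology \<times> real) measure) \<rightarrow>\<^sub>M prob_algebra borel"
  unfolding price_kernel_def by measurable

lemma measurable_belief_kernel[measurable]:
  fixes \<nu> :: "real \<times> 'tb::second_countable_topology \<Rightarrow> real measure"
  assumes [measurable]: "\<nu> \<in> borel \<rightarrow>\<^sub>M prob_algebra borel"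
  shows "belief_kernel \<sigma> \<nu> \<in> (borel :: ('ts \<times> 'tb \<times> real) measure) \<rightarrow>\<^sub>M prob_algebra borel"
  unfolding belief_kernel_def by measurable

lemma joint_in_prob_algebra:
  fixes P :: "('ts \<times> 'tb::second_countable_topology \<times> real) measure"
  assumes "P \<in> space (prob_algebra borel)"
  shows "joint P \<sigma> \<in> space (prob_algebra borel)"
  using prob_space_bind'[OF assms measurable_price_kernel] sets_bind'[OF assms measurable_price_kernel]
  by (simp add: space_prob_algebra joint_eq_bind_price_kernel)

lemma measurable_joint:
  fixes P :: "('ts \<times> 'tb::second_countable_topology \<times> real) measure"
  assumes "P \<in> space (prob_algebra borel)" and "f \<in> borel \<rightarrow>\<^sub>M N"
  shows "f \<in> joint P \<sigma> \<rightarrow>\<^sub>M N"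
  using joint_in_prob_algebra[OF assms(1)] assms(2)
  by (simp add: space_prob_algebra cong: measurable_cong_sets)

lemma strategy_in_prob_algebra: "\<sigma> t \<in> space (prob_algebra borel)"
  using measurable_space[OF \<sigma>] by simp

lemma integral_joint:
  fixes P :: "('ts \<times> 'tb::second_countable_topology \<times> real) measure"
    and h :: "real \<times> 'ts \<times> 'tb \<times> real \<Rightarrow> real"
  assumes P: "P \<in> space (prob_algebra borel)"
    and h: "h \<in> borel_measurable borel" and h_bound: "\<And>x. \<bar>h x\<bar> \<le> B"
  shows "integral\<^sup>L (joint P \<sigma>) h = (\<integral>y. (\<integral>p. h (p, y) \<partial>\<sigma> (fst y)) \<partial>P)"
proof -
  have "integral\<^sup>L (price_kernel \<sigma> y) h = (\<integral>p. h (p, y) \<partial>\<sigma> (fst y))" for y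
    unfolding price_kernel_def
    by (subst integral_bind_prob_algebra[OF strategy_in_prob_algebra _ h h_bound])
       (auto simp: integral_return h)
  then show ?thesis
    by (simp add: joint_eq_bind_price_kernel integral_bind_prob_algebra[OF P _ h h_bound])
qed

lemma integral_belief_joint:
  fixes P :: "('ts \<times> 'tb::second_countable_topology \<times> real) measure"
    and h :: "real \<times> 'ts \<times> 'tb \<times> real \<Rightarrow> real"
  assumes P: "P \<in> space (prob_algebra borel)" and \<nu>[measurable]: "\<nu> \<in> borel \<rightarrow>\<^sub>M prob_algebra borel"
    and h: "h \<in> borel_measurable borel" and h_bound: "\<And>x. \<bar>h x\<bar> \<le> B"
  shows "integral\<^sup>L (belief_joint P \<sigma> \<nu>) h =
    (\<integral>y. (\<integral>p. (\<integral>w. h (p, fst y, fst (snd y), w) \<partial>\<nu> (p, fst (snd y))) \<partial>\<sigma> (fst y)) \<partial>P)"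
proof -
  have \<nu>_space: "\<nu> a \<in> space (prob_algebra borel)" for a
    using measurable_space[OF \<nu>] by simp
  have "integral\<^sup>L (belief_kernel \<sigma> \<nu> y) h =
      (\<integral>p. (\<integral>w. h (p, fst y, fst (snd y), w) \<partial>\<nu> (p, fst (snd y))) \<partial>\<sigma> (fst y))" for y
    unfolding belief_kernel_def
    by (subst integral_bind_prob_algebra[OF strategy_in_prob_algebra _ h h_bound], measurable)
       (auto simp: integral_bind_prob_algebra[OF \<nu>_space _ h h_bound] integral_return h)
  then show ?thesis
    by (simp add: belief_joint_eq_bind_belief_kernel integral_bind_prob_algebra[OF P _ h h_bound])
qed

lemma distr_joint:
  fixes P :: "('ts \<times> 'tb::second_countable_topology \<times> real) measure"
  assumes P: "P \<in> space (prob_algebra borel)" and f: "f \<in> borel \<rightarrow>\<^sub>M N"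
  shows "distr (joint P \<sigma>) N f = P \<bind> (\<lambda>y. \<sigma> (fst y) \<bind> (\<lambda>p. return N (f (p, y))))"
proof -
  have "sets P = sets borel" "space P \<noteq> {}"
    using P by (auto simp: space_prob_algebra prob_space.not_empty)
  moreover have "distr (price_kernel \<sigma> y) N f = \<sigma> (fst y) \<bind> (\<lambda>p. return N (f (p, y)))" for y
    unfolding price_kernel_def
    using strategy_in_prob_algebra[of "fst y"] f
    by (subst distr_bind[where K=borel]) (auto simp: space_prob_algebra prob_space.not_empty distr_return
        intro!: measurable_prob_algebraD cong: measurable_cong_sets)
  ultimately show ?thesis
    unfolding joint_eq_bind_price_kernel
    by (subst distr_bind[OF _ _ f]) (auto intro!: measurable_prob_algebraD cong: measurable_cong_sets)
qed

lemma distr_joint_snd: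
  fixes P :: "('ts \<times> 'tb::second_countable_topology \<times> real) measure"
  assumes P: "P \<in> space (prob_algebra borel)"
  shows "distr (joint P \<sigma>) borel snd = P"
proof -
  have "\<sigma> (fst y) \<bind> (\<lambda>p. return borel y) = return borel y" for y :: "'ts \<times> 'tb \<times> real"
    using strategy_in_prob_algebra[of "fst y"]
    by (intro bind_const') (auto simp: space_prob_algebra prob_space_imp_subprob_space prob_space_return)
  then show ?thesis
    using P by (simp add: distr_joint[OF P] bind_return'' space_prob_algebra)
qed

lemma distr_joint_fst:
  fixes P :: "('ts \<times> 'tb::second_countable_topology \<times> real) measure"
  assumes P: "P \<in> space (prob_algebra borel)"
  shows "distr (joint P \<sigma>) borel fst = P \<bind> (\<lambda>y. \<sigma> (fst y))"
  using strategy_in_prob_algebra by (simp add: distr_joint[OF P] bind_return'' space_prob_algebra)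

end

lemma joint_const_price:
  fixes P :: "('ts::second_countable_topology \<times> 'tb::second_countable_topology \<times> real) measure"
  assumes P: "P \<in> space (prob_algebra borel)"
  shows "joint P (\<lambda>_. return borel p) = distr P borel (Pair p)"
proof -
  have "price_kernel (\<lambda>_. return borel p) = (\<lambda>y :: 'ts \<times> 'tb \<times> real. return borel (p, y))"
    unfolding price_kernel_def by (intro ext bind_return[where N=borel]) simp_all
  moreover have "Pair p \<in> P \<rightarrow>\<^sub>M borel" "space P \<noteq> {}"
    using P by (auto simp: space_prob_algebra prob_space.not_empty cong: measurable_cong_sets)
  ultimately show ?thesis
    by (simp add: joint_eq_bind_price_kernel bind_return_distr'[symmetric])
qed

lemma info_structure_in_prob_algebra: "info_structure \<mu> P \<Longrightarrow> P \<in> space (prob_algebra borel)"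
  by (simp add: info_structure_def space_prob_algebra)

lemma distr_joint_value:
  fixes P :: "('ts::second_countable_topology \<times> 'tb::second_countable_topology \<times> real) measure"
  assumes P: "info_structure \<mu> P" and \<sigma>: "\<sigma> \<in> borel \<rightarrow>\<^sub>M prob_algebra borel"
  shows "distr (joint P \<sigma>) borel (\<lambda>(p, ts, tb, v). v) = \<mu>"
proof -
  have "distr (joint P \<sigma>) borel (\<lambda>(p, ts, tb, v). v) =
      distr (distr (joint P \<sigma>) borel snd) borel (\<lambda>y. snd (snd y))"
    using joint_in_prob_algebra[OF \<sigma> info_structure_in_prob_algebra[OF P]]
    by (subst distr_distr) (auto simp: comp_def split_beta' space_prob_algebra cong: measurable_cong_sets)
  then show ?thesis
    using P by (simp add: distr_joint_snd[OF \<sigma> info_structure_in_prob_algebra[OF P]] info_structure_def)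
qed

locale environment =
  fixes V :: "real set" and \<mu> :: "real measure" and c :: "real \<Rightarrow> real"
  assumes prob_space_\<mu>: "prob_space \<mu>" and sets_\<mu>: "sets \<mu> = sets borel"
    and compact_V: "compact V" and V_nonempty: "V \<noteq> {}"
    and support_\<mu>: "support_of \<mu> = V"
    and continuous_c: "continuous_on V c"
    and gains_nonneg: "\<forall>v\<in>V. v - c v \<ge> 0"
begin

sublocale \<mu>: prob_space \<mu>
  by (rule prob_space_\<mu>)

lemma \<mu>_in_prob_algebra: "\<mu> \<in> space (prob_algebra borel)"
  using prob_space_\<mu> sets_\<mu> by (simp add: space_prob_algebra)

lemma AE_\<mu>_in_V: "AE v in \<mu>. v \<in> V"
  using AE_in_support_of[OF sets_\<mu>] by (simp add: support_\<mu>)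

lemma V_borel[measurable]: "V \<in> sets borel"
  using compact_V by (simp add: compact_imp_closed)

lemma Inf_V_in_V: "Inf V \<in> V" and Sup_V_in_V: "Sup V \<in> V"
  using compact_V V_nonempty
  by (auto intro!: closed_contains_Inf closed_contains_Sup compact_imp_closed
      bounded_imp_bdd_below bounded_imp_bdd_above compact_imp_bounded)

lemma Inf_V_le: "v \<in> V \<Longrightarrow> Inf V \<le> v" and le_Sup_V: "v \<in> V \<Longrightarrow> v \<le> Sup V"
  using compact_V
  by (auto intro!: cInf_lower cSup_upper bounded_imp_bdd_below bounded_imp_bdd_above compact_imp_bounded)

lemma V_bounded: obtains B where "\<And>v. v \<in> V \<Longrightarrow> \<bar>v\<bar> \<le> B"
  using Inf_V_le le_Sup_V by (metis abs_le_iff max.cobounded1 max.cobounded2 minus_le_iff order_trans)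

lemma measurable_cost[measurable]: "costV V c \<in> borel_measurable borel"
proof -
  have "costV V c = (\<lambda>v. indicator V v *\<^sub>R c v)"
    by (simp add: fun_eq_iff costV_def)
  then show ?thesis
    using borel_measurable_continuous_on_indicator[OF V_borel continuous_c] by simp
qed

lemma cost_bounded: obtains B where "\<And>v. \<bar>costV V c v\<bar> \<le> B"
proof -
  obtain B where "\<And>v. v \<in> V \<Longrightarrow> \<bar>c v\<bar> \<le> B"
    using compact_imp_bounded[OF compact_continuous_image[OF continuous_c compact_V]]
    by (auto simp: bounded_iff)
  then show thesis
    using Inf_V_in_V by (intro that[of B]) (force simp: costV_def)
qed

definition mean_value :: real where "mean_value = (\<integral>v. v \<partial>\<mu>)"

definition mean_cost :: real where "mean_cost = (\<integral>v. costV V c v \<partial>\<mu>)"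

lemma integrable_if_bounded_on_V:
  fixes N :: "real measure" and f :: "real \<Rightarrow> real"
  assumes N: "N \<in> space (prob_algebra borel)" "AE v in N. v \<in> V"
    and f: "f \<in> borel_measurable borel" "\<And>v. v \<in> V \<Longrightarrow> \<bar>f v\<bar> \<le> B"
  shows "integrable N f"
  using N f by (intro integrable_AE_bounded[OF N(1) f(1)]) (auto elim!: eventually_mono)

lemma
  fixes N :: "real measure"
  assumes N: "N \<in> space (prob_algebra borel)" "AE v in N. v \<in> V"
  shows Inf_V_le_mean: "Inf V \<le> (\<integral>v. v \<partial>N)" and mean_le_Sup_V: "(\<integral>v. v \<partial>N) \<le> Sup V"
proof -
  interpret prob_space N
    using N by (simp add: space_prob_algebra)
  obtain B where "\<And>v. v \<in> V \<Longrightarrow> \<bar>v\<bar> \<le> B"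
    using V_bounded by blast
  then have "integrable N (\<lambda>v. v)"
    using N by (intro integrable_if_bounded_on_V) auto
  moreover have "AE v in N. Inf V \<le> v" "AE v in N. v \<le> Sup V"
    using N(2) by (auto simp: Inf_V_le le_Sup_V elim!: eventually_mono)
  ultimately show "Inf V \<le> (\<integral>v. v \<partial>N)" "(\<integral>v. v \<partial>N) \<le> Sup V"
    using integral_mono_AE[of N "\<lambda>_. Inf V" "\<lambda>v. v"] integral_mono_AE[of N "\<lambda>v. v" "\<lambda>_. Sup V"]
    by (auto simp: prob_space)
qed

lemma integrable_value: "integrable \<mu> (\<lambda>v. v)"
proof -
  obtain B where "\<And>v. v \<in> V \<Longrightarrow> \<bar>v\<bar> \<le> B"
    using V_bounded by blast
  then show ?thesis
    by (intro integrable_if_bounded_on_V[OF \<mu>_in_prob_algebra AE_\<mu>_in_V]) auto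
qed

lemma integrable_cost: "integrable \<mu> (costV V c)"
proof -
  obtain B where "\<And>v. \<bar>costV V c v\<bar> \<le> B"
    using cost_bounded by blast
  then show ?thesis
    by (intro integrable_if_bounded_on_V[OF \<mu>_in_prob_algebra AE_\<mu>_in_V]) auto
qed

lemma integral_const_minus_cost: "(\<integral>v. k - costV V c v \<partial>\<mu>) = k - mean_cost"
  using Bochner_Integration.integral_diff[OF \<mu>.integrable_const integrable_cost]
  by (simp add: mean_cost_def \<mu>.prob_space)

lemma surplus_eq: "surplus \<mu> V c = mean_value - mean_cost"
  unfolding surplus_def mean_value_def mean_cost_def
  by (rule Bochner_Integration.integral_diff[OF integrable_value integrable_cost])

lemma integral_info_structure_value:
  fixes P :: "('ts::second_countable_topology \<times> 'tb::second_countable_topology \<times> real) measure"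
    and f :: "real \<Rightarrow> real"
  assumes P: "info_structure \<mu> P" and f: "f \<in> borel_measurable borel"
  shows "(\<integral>(ts, tb, v). f v \<partial>P) = (\<integral>v. f v \<partial>\<mu>)"
proof -
  have "(\<lambda>y. snd (snd y)) \<in> P \<rightarrow>\<^sub>M (borel :: real measure)"
    using P by (auto simp: info_structure_def cong: measurable_cong_sets)
  from integral_distr[OF this f] show ?thesis
    using P by (simp add: info_structure_def split_beta')
qed

context
  fixes P :: "('ts::second_countable_topology \<times> 'tb::second_countable_topology \<times> real) measure"
    and \<sigma> :: "'ts \<Rightarrow> real measure"
  assumes P: "info_structure \<mu> P" and \<sigma>: "\<sigma> \<in> borel \<rightarrow>\<^sub>M prob_algebra borel"
begin

lemma measurable_joint_value: "(\<lambda>(p, ts, tb, v). v) \<in> joint P \<sigma> \<rightarrow>\<^sub>M (borel :: real measure)"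
  by (rule measurable_joint[OF \<sigma> info_structure_in_prob_algebra[OF P]]) measurable

lemma AE_joint_value_in_V: "AE (p, ts, tb, v) in joint P \<sigma>. v \<in> V"
proof -
  have "AE v in distr (joint P \<sigma>) borel (\<lambda>(p, ts, tb, v). v). v \<in> V"
    unfolding distr_joint_value[OF P \<sigma>] by (rule AE_\<mu>_in_V)
  then show ?thesis
    by (subst (asm) AE_distr_iff[OF measurable_joint_value]) (auto simp: split_beta')
qed

lemma integral_joint_value:
  fixes f :: "real \<Rightarrow> real"
  assumes "f \<in> borel_measurable borel"
  shows "(\<integral>(p, ts, tb, v). f v \<partial>joint P \<sigma>) = (\<integral>v. f v \<partial>\<mu>)"
  using integral_distr[OF measurable_joint_value assms]
  unfolding distr_joint_value[OF P \<sigma>] by (simp add: split_beta')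

lemma integrable_joint_value_iff:
  fixes f :: "real \<Rightarrow> real"
  assumes "f \<in> borel_measurable borel"
  shows "integrable (joint P \<sigma>) (\<lambda>(p, ts, tb, v). f v) \<longleftrightarrow> integrable \<mu> f"
  using integrable_distr_eq[OF measurable_joint_value assms]
  unfolding distr_joint_value[OF P \<sigma>] by (simp add: split_beta')

end

end

section \<open>Payoffs of an arbitrary equilibrium\<close>

locale equilibrium = environment V \<mu> c for V \<mu> c +
  fixes P :: "('ts::second_countable_topology \<times> 'tb::second_countable_topology \<times> real) measure"
    and \<sigma> :: "'ts \<Rightarrow> real measure" and \<alpha> :: "real \<times> 'tb \<Rightarrow> real"
    and \<nu> :: "real \<times> 'tb \<Rightarrow> real measure"
  assumes info_structure_P: "info_structure \<mu> P" and wPBE: "wPBE V c P \<sigma> \<alpha> \<nu>"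
begin

lemma P_in_prob_algebra: "P \<in> space (prob_algebra borel)"
  using info_structure_P by (rule info_structure_in_prob_algebra)

lemma strategy_measurable[measurable]: "\<sigma> \<in> borel \<rightarrow>\<^sub>M prob_algebra borel"
  using wPBE by (simp add: wPBE_def seller_strategy_def)

lemma acceptance_measurable[measurable]: "\<alpha> \<in> borel_measurable borel"
  and acceptance_nonneg: "0 \<le> \<alpha> a" and acceptance_le_1: "\<alpha> a \<le> 1"
  using wPBE unfolding wPBE_def by blast+

lemma belief_measurable[measurable]: "\<nu> \<in> borel \<rightarrow>\<^sub>M prob_algebra borel"
  and belief_on_V: "measure (\<nu> a) V = 1"
  using wPBE unfolding wPBE_def by blast+

lemma accept_if_belief_mean_gt: "p < (\<integral>v. v \<partial>\<nu> (p, tb)) \<Longrightarrow> \<alpha> (p, tb) = 1"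
  and reject_if_belief_mean_lt: "(\<integral>v. v \<partial>\<nu> (p, tb)) < p \<Longrightarrow> \<alpha> (p, tb) = 0"
  using wPBE by (simp_all add: wPBE_def)

lemma seller_integrable: "integrable (joint P \<sigma>) (seller_integrand V c \<alpha>)"
  using wPBE by (simp add: wPBE_def)

lemma seller_best_response:
  "seller_strategy \<sigma>' \<Longrightarrow> integrable (joint P \<sigma>') (seller_integrand V c \<alpha>) \<Longrightarrow>
    seller_payoff V c P \<sigma>' \<alpha> \<le> seller_payoff V c P \<sigma> \<alpha>"
  using wPBE by (simp add: wPBE_def)

lemma belief_consistent: "belief_joint P \<sigma> \<nu> = joint P \<sigma>"
  using wPBE by (simp add: wPBE_def)

lemma joint_P_in_prob_algebra: "joint P \<sigma> \<in> space (prob_algebra borel)"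
  by (rule joint_in_prob_algebra[OF strategy_measurable P_in_prob_algebra])

lemma belief_in_prob_algebra: "\<nu> a \<in> space (prob_algebra borel)"
  using measurable_space[OF belief_measurable] by simp

lemma AE_belief_in_V: "AE v in \<nu> a. v \<in> V"
  using belief_in_prob_algebra belief_on_V
  by (intro prob_space.AE_prob_1) (auto simp: space_prob_algebra)

lemma abs_acceptance_mult_le: "\<bar>\<alpha> a * x\<bar> \<le> \<bar>x\<bar>"
  using acceptance_nonneg[of a] acceptance_le_1[of a] by (simp add: abs_mult mult_left_le_one_le)

lemma acceptance_mult_le: "0 \<le> x \<Longrightarrow> \<alpha> a * x \<le> x"
  using acceptance_nonneg[of a] acceptance_le_1[of a] by (simp add: mult_left_le_one_le)

lemma integrable_total_gain: "integrable (joint P \<sigma>) (\<lambda>(p, ts, tb, v). \<alpha> (p, tb) * (v - costV V c v))"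
proof -
  obtain Bv where Bv: "\<And>v. v \<in> V \<Longrightarrow> \<bar>v\<bar> \<le> Bv"
    using V_bounded by blast
  obtain Bc where Bc: "\<And>v. \<bar>costV V c v\<bar> \<le> Bc"
    using cost_bounded by blast
  have "\<bar>\<alpha> (p, tb) * (v - costV V c v)\<bar> \<le> Bv + Bc" if "v \<in> V" for p tb v
    using abs_acceptance_mult_le[of "(p, tb)" "v - costV V c v"] Bv[OF that] Bc[of v] by linarith
  then show ?thesis
    using AE_joint_value_in_V[OF info_structure_P strategy_measurable]
    by (intro integrable_AE_bounded[OF joint_P_in_prob_algebra, where B="Bv + Bc"])
       (auto simp: split_beta' elim!: eventually_mono)
qed

lemma buyer_integrable: "integrable (joint P \<sigma>) (buyer_integrand \<alpha>)"
proof -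
  have "(buyer_integrand \<alpha> :: real \<times> 'ts \<times> 'tb \<times> real \<Rightarrow> real) =
      (\<lambda>x. (\<lambda>(p, ts, tb, v). \<alpha> (p, tb) * (v - costV V c v)) x - seller_integrand V c \<alpha> x)"
    by (auto simp: fun_eq_iff buyer_integrand_def seller_integrand_def algebra_simps)
  then show ?thesis
    using Bochner_Integration.integrable_diff[OF integrable_total_gain seller_integrable] by simp
qed

lemma payoff_sum_le_surplus: "buyer_payoff P \<sigma> \<alpha> + seller_payoff V c P \<sigma> \<alpha> \<le> surplus \<mu> V c"
proof -
  have "buyer_payoff P \<sigma> \<alpha> + seller_payoff V c P \<sigma> \<alpha> =
      (\<integral>(p, ts, tb, v). \<alpha> (p, tb) * (v - costV V c v) \<partial>joint P \<sigma>)"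
    unfolding buyer_payoff_def seller_payoff_def
    by (subst Bochner_Integration.integral_add[OF buyer_integrable seller_integrable, symmetric])
       (auto simp: buyer_integrand_def seller_integrand_def split_beta' algebra_simps
             intro!: Bochner_Integration.integral_cong)
  also have "\<dots> \<le> (\<integral>(p, ts, tb, v). v - costV V c v \<partial>joint P \<sigma>)"
  proof (rule integral_mono_AE[OF integrable_total_gain])
    show "integrable (joint P \<sigma>) (\<lambda>(p, ts, tb, v). v - costV V c v)"
      using Bochner_Integration.integrable_diff[OF integrable_value integrable_cost]
      by (subst integrable_joint_value_iff[OF info_structure_P strategy_measurable]) auto
    show "AE x in joint P \<sigma>. (case x of (p, ts, tb, v) \<Rightarrow> \<alpha> (p, tb) * (v - costV V c v))
        \<le> (case x of (p, ts, tb, v) \<Rightarrow> v - costV V c v)"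
      using AE_joint_value_in_V[OF info_structure_P strategy_measurable] gains_nonneg
      by (auto simp: costV_def split_beta' intro!: acceptance_mult_le elim!: eventually_mono)
  qed
  also have "\<dots> = surplus \<mu> V c"
    unfolding surplus_def by (rule integral_joint_value[OF info_structure_P strategy_measurable]) simp
  finally show ?thesis .
qed

lemma const_price_deviation_le:
  "(\<integral>(ts, tb, v). (p - costV V c v) * \<alpha> (p, tb) \<partial>P) \<le> seller_payoff V c P \<sigma> \<alpha>"
proof -
  have J: "joint P (\<lambda>_. return borel p) = distr P borel (Pair p)"
    by (rule joint_const_price[OF P_in_prob_algebra])
  have Pair_p: "Pair p \<in> P \<rightarrow>\<^sub>M borel"
    using P_in_prob_algebra by (auto simp: space_prob_algebra cong: measurable_cong_sets)
  have strategy: "seller_strategy (\<lambda>_::'ts. return (borel :: real measure) p)"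
    by (simp add: seller_strategy_def space_prob_algebra prob_space_return)
  obtain B where B: "\<And>v. \<bar>costV V c v\<bar> \<le> B"
    using cost_bounded by blast
  have "\<bar>(p - costV V c v) * \<alpha> a\<bar> \<le> \<bar>p\<bar> + B" for v a
    using abs_acceptance_mult_le[of a "p - costV V c v"] B[of v] by (simp add: mult.commute)
  then have "integrable P (\<lambda>(ts, tb, v). (p - costV V c v) * \<alpha> (p, tb))"
    by (intro integrable_AE_bounded[OF P_in_prob_algebra, where B="\<bar>p\<bar> + B"]) (auto simp: split_beta')
  then have "integrable (joint P (\<lambda>_. return borel p)) (seller_integrand V c \<alpha>)"
    unfolding J by (subst integrable_distr_eq[OF Pair_p]) (auto simp: seller_integrand_def split_beta')
  from seller_best_response[OF strategy this] show ?thesis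
    unfolding seller_payoff_def J
    by (simp add: integral_distr[OF Pair_p] seller_integrand_def split_beta')
qed

lemma low_price_accepted: "p < Inf V \<Longrightarrow> \<alpha> (p, tb) = 1"
  using Inf_V_le_mean[OF belief_in_prob_algebra AE_belief_in_V, of "(p, tb)"]
  by (auto intro!: accept_if_belief_mean_gt)

lemma high_price_rejected: "Sup V < p \<Longrightarrow> \<alpha> (p, tb) = 0"
  using mean_le_Sup_V[OF belief_in_prob_algebra AE_belief_in_V, of "(p, tb)"]
  by (auto intro!: reject_if_belief_mean_lt)

lemma seller_payoff_ge_floor: "seller_floor \<mu> V c \<le> seller_payoff V c P \<sigma> \<alpha>"
proof -
  have "0 \<le> seller_payoff V c P \<sigma> \<alpha>"
    using const_price_deviation_le[of "Sup V + 1"] by (simp add: high_price_rejected split_beta')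
  moreover have "Inf V - mean_cost \<le> seller_payoff V c P \<sigma> \<alpha>"
  proof (rule dense_le)
    fix x assume "x < Inf V - mean_cost"
    then have "\<alpha> (x + mean_cost, tb) = 1" for tb
      by (intro low_price_accepted) simp
    then have "(\<integral>(ts, tb, v). (x + mean_cost - costV V c v) * \<alpha> (x + mean_cost, tb) \<partial>P) =
        (\<integral>v. x + mean_cost - costV V c v \<partial>\<mu>)"
      by (simp add: integral_info_structure_value[OF info_structure_P])
    also have "\<dots> = x"
      by (simp add: integral_const_minus_cost)
    finally show "x \<le> seller_payoff V c P \<sigma> \<alpha>"
      using const_price_deviation_le[of "x + mean_cost"] by simp
  qed
  ultimately show ?thesis
    by (simp add: seller_floor_def mean_cost_def)
qed

definition belief_mean :: "real \<times> 'tb \<Rightarrow> real" where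
  "belief_mean a = (\<integral>w. w \<partial>\<nu> a)"

lemma measurable_belief_mean[measurable]: "belief_mean \<in> borel_measurable borel"
  unfolding belief_mean_def
  using measurable_prob_algebraD[OF belief_measurable] by measurable

lemma belief_mean_bounds: "Inf V \<le> belief_mean a" "belief_mean a \<le> Sup V"
  unfolding belief_mean_def
  by (intro Inf_V_le_mean mean_le_Sup_V belief_in_prob_algebra AE_belief_in_V)+

lemma acceptance_mult_belief_gain_nonneg: "0 \<le> \<alpha> (p, tb) * (belief_mean (p, tb) - p)"
proof (cases "belief_mean (p, tb) < p")
  case True
  then show ?thesis
    by (simp add: reject_if_belief_mean_lt belief_mean_def)
qed (simp add: acceptance_nonneg)

lemma integral_truncated_belief_deviation: "(\<integral>w. w * indicator V w - belief_mean a \<partial>\<nu> a) = 0"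
proof -
  interpret \<nu>: prob_space "\<nu> a"
    using belief_in_prob_algebra by (simp add: space_prob_algebra)
  have "sets (\<nu> a) = sets borel"
    using belief_in_prob_algebra by (simp add: space_prob_algebra)
  then have "(\<integral>w. w * indicator V w \<partial>\<nu> a) = belief_mean a"
    unfolding belief_mean_def using AE_belief_in_V[of a]
    by (intro integral_cong_AE) (auto cong: measurable_cong_sets elim!: eventually_mono)
  moreover obtain B where "\<And>v. v \<in> V \<Longrightarrow> \<bar>v\<bar> \<le> B"
    using V_bounded by blast
  then have "integrable (\<nu> a) (\<lambda>w. w * indicator V w)"
    by (intro integrable_if_bounded_on_V[OF belief_in_prob_algebra AE_belief_in_V]) auto
  ultimately show ?thesis
    by (simp add: Bochner_Integration.integral_diff \<nu>.prob_space)
qed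

lemma
  shows integrable_belief_residual:
    "integrable (joint P \<sigma>) (\<lambda>(p, ts, tb, v). \<alpha> (p, tb) * (v - belief_mean (p, tb)))"
  and integral_belief_residual:
    "(\<integral>(p, ts, tb, v). \<alpha> (p, tb) * (v - belief_mean (p, tb)) \<partial>joint P \<sigma>) = 0"
proof -
  \<comment> \<open>Truncating v to V changes nothing almost surely, but gives the bounded integrand
    that integral_belief_joint requires.\<close>
  define h where "h = (\<lambda>(p, ts :: 'ts, tb, v). \<alpha> (p, tb) * (v * indicator V v - belief_mean (p, tb)))"
  have h_measurable: "h \<in> borel_measurable borel"
    unfolding h_def by measurable
  obtain B where B: "\<And>v. v \<in> V \<Longrightarrow> \<bar>v\<bar> \<le> B"
    using V_bounded by blast
  have mean_bound: "\<bar>belief_mean a\<bar> \<le> B" for a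
    using belief_mean_bounds[of a] B[OF Inf_V_in_V] B[OF Sup_V_in_V] by (simp add: abs_le_iff)
  have "\<bar>v * indicator V v - belief_mean a\<bar> \<le> B + B" for v a
    using B[of v] mean_bound[of a] by (auto simp: indicator_def)
  then have h_bound: "\<bar>h x\<bar> \<le> B + B" for x
    unfolding h_def split_beta' by (rule order_trans[OF abs_acceptance_mult_le])
  have AE_eq: "AE x in joint P \<sigma>. h x = (\<lambda>(p, ts, tb, v). \<alpha> (p, tb) * (v - belief_mean (p, tb))) x"
    using AE_joint_value_in_V[OF info_structure_P strategy_measurable]
    by (auto simp: h_def split_beta' elim!: eventually_mono)
  have residual_measurable:
    "(\<lambda>(p, ts, tb, v). \<alpha> (p, tb) * (v - belief_mean (p, tb))) \<in> borel_measurable (joint P \<sigma>)"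
    by (rule measurable_joint[OF strategy_measurable P_in_prob_algebra]) measurable
  show "integrable (joint P \<sigma>) (\<lambda>(p, ts, tb, v). \<alpha> (p, tb) * (v - belief_mean (p, tb)))"
    using integrable_AE_bounded[OF joint_P_in_prob_algebra h_measurable AE_I2[OF h_bound]]
    by (rule integrable_cong_AE_imp[OF _ residual_measurable AE_eq])
  have "(\<integral>(p, ts, tb, v). \<alpha> (p, tb) * (v - belief_mean (p, tb)) \<partial>joint P \<sigma>) = (\<integral>x. h x \<partial>joint P \<sigma>)"
    using AE_eq
    by (intro integral_cong_AE[OF residual_measurable]
        measurable_joint[OF strategy_measurable P_in_prob_algebra h_measurable])
       (auto elim!: eventually_mono)
  also have "\<dots> = (\<integral>x. h x \<partial>belief_joint P \<sigma> \<nu>)"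
    by (simp add: belief_consistent)
  also have "\<dots> = 0"
    unfolding integral_belief_joint[OF strategy_measurable P_in_prob_algebra belief_measurable
        h_measurable h_bound]
    using integral_truncated_belief_deviation by (simp add: h_def)
  finally show "(\<integral>(p, ts, tb, v). \<alpha> (p, tb) * (v - belief_mean (p, tb)) \<partial>joint P \<sigma>) = 0" .
qed

lemma buyer_payoff_nonneg: "0 \<le> buyer_payoff P \<sigma> \<alpha>"
proof -
  define r where "r = (\<lambda>(p, ts :: 'ts, tb, v). \<alpha> (p, tb) * (v - belief_mean (p, tb)))"
  define g where "g = (\<lambda>(p, ts :: 'ts, tb, v :: real). \<alpha> (p, tb) * (belief_mean (p, tb) - p))"
  have buyer_eq: "buyer_integrand \<alpha> = (\<lambda>x. r x + g x)"
    by (auto simp: fun_eq_iff buyer_integrand_def r_def g_def algebra_simps)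
  have r_integrable: "integrable (joint P \<sigma>) r"
    using integrable_belief_residual by (simp add: r_def)
  have "g = (\<lambda>x. buyer_integrand \<alpha> x - r x)"
    by (simp add: buyer_eq)
  then have g_integrable: "integrable (joint P \<sigma>) g"
    using Bochner_Integration.integrable_diff[OF buyer_integrable r_integrable] by simp
  have "buyer_payoff P \<sigma> \<alpha> = integral\<^sup>L (joint P \<sigma>) r + integral\<^sup>L (joint P \<sigma>) g"
    unfolding buyer_payoff_def buyer_eq
    by (rule Bochner_Integration.integral_add[OF r_integrable g_integrable])
  also have "\<dots> = integral\<^sup>L (joint P \<sigma>) g"
    using integral_belief_residual by (simp add: r_def)
  also have "\<dots> \<ge> 0"
    by (rule Bochner_Integration.integral_nonneg) (auto simp: g_def acceptance_mult_belief_gain_nonneg)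
  finally show ?thesis .
qed

lemma payoffs_in_target_set: "(buyer_payoff P \<sigma> \<alpha>, seller_payoff V c P \<sigma> \<alpha>) \<in> target_set \<mu> V c"
  using buyer_payoff_nonneg seller_payoff_ge_floor payoff_sum_le_surplus by (simp add: target_set_def)

end

section \<open>Equilibria without information\<close>

context environment
begin

definition no_info :: "(real \<times> real \<times> real) measure" where
  "no_info = distr \<mu> borel (\<lambda>v. (0, 0, v))"

lemma measurable_no_info_embedding: "(\<lambda>v. (0::real, 0::real, v)) \<in> \<mu> \<rightarrow>\<^sub>M borel"
  using sets_\<mu> by (simp cong: measurable_cong_sets)

lemma info_structure_no_info: "info_structure \<mu> no_info"
proof -
  have "distr no_info borel (\<lambda>y. snd (snd y)) = distr \<mu> borel (\<lambda>v. v)"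
    unfolding no_info_def by (subst distr_distr) (auto simp: comp_def measurable_no_info_embedding)
  then show ?thesis
    using \<mu>.prob_space_distr[OF measurable_no_info_embedding] distr_id2[OF sets_\<mu>[symmetric]]
    by (simp add: info_structure_def no_info_def)
qed

lemma no_info_in_prob_algebra: "no_info \<in> space (prob_algebra borel)"
  by (rule info_structure_in_prob_algebra[OF info_structure_no_info])

lemma integral_no_info:
  fixes f :: "real \<times> real \<times> real \<Rightarrow> real"
  assumes "f \<in> borel_measurable borel"
  shows "(\<integral>y. f y \<partial>no_info) = (\<integral>v. f (0, 0, v) \<partial>\<mu>)"
  unfolding no_info_def by (rule integral_distr[OF measurable_no_info_embedding assms])

context
  fixes \<sigma> :: "real \<Rightarrow> real measure"
  assumes \<sigma>[measurable]: "\<sigma> \<in> borel \<rightarrow>\<^sub>M prob_algebra borel"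
begin

lemma distr_joint_no_info_fst: "distr (joint no_info \<sigma>) borel fst = \<sigma> 0"
proof -
  have "distr (joint no_info \<sigma>) borel fst = no_info \<bind> (\<lambda>y. \<sigma> (fst y))"
    by (rule distr_joint_fst[OF \<sigma> no_info_in_prob_algebra])
  also have "\<dots> = \<mu> \<bind> (\<lambda>v. \<sigma> 0)"
    using measurable_prob_algebraD[OF \<sigma>] unfolding no_info_def
    by (subst bind_distr[OF measurable_no_info_embedding, where K=borel]) (auto simp: \<mu>.not_empty)
  also have "\<dots> = \<sigma> 0"
    using strategy_in_prob_algebra[OF \<sigma>, of 0]
    by (intro bind_const'[OF prob_space_\<mu>]) (simp add: space_prob_algebra prob_space_imp_subprob_space)
  finally show ?thesis .
qed

lemma
  fixes f :: "real \<Rightarrow> real"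
  assumes "f \<in> borel_measurable borel"
  shows integrable_joint_no_info_price_iff:
      "integrable (joint no_info \<sigma>) (\<lambda>(p, ts, tb, v). f p) \<longleftrightarrow> integrable (\<sigma> 0) f"
    and integral_joint_no_info_price:
      "(\<integral>(p, ts, tb, v). f p \<partial>joint no_info \<sigma>) = (\<integral>p. f p \<partial>\<sigma> 0)"
proof -
  have "fst \<in> joint no_info \<sigma> \<rightarrow>\<^sub>M (borel :: real measure)"
    by (rule measurable_joint[OF \<sigma> no_info_in_prob_algebra]) measurable
  from integrable_distr_eq[OF this assms] integral_distr[OF this assms]
  show "integrable (joint no_info \<sigma>) (\<lambda>(p, ts, tb, v). f p) \<longleftrightarrow> integrable (\<sigma> 0) f"
    and "(\<integral>(p, ts, tb, v). f p \<partial>joint no_info \<sigma>) = (\<integral>p. f p \<partial>\<sigma> 0)"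
    unfolding distr_joint_no_info_fst by (simp_all add: split_beta')
qed

lemma
  fixes a k :: "real \<Rightarrow> real"
  assumes a[measurable]: "a \<in> borel_measurable borel" and a_bound: "\<And>p. \<bar>a p\<bar> \<le> 1"
    and k[measurable]: "k \<in> borel_measurable borel" and k_bound: "\<And>v. v \<in> V \<Longrightarrow> \<bar>k v\<bar> \<le> B"
  shows integrable_joint_no_info_mult: "integrable (joint no_info \<sigma>) (\<lambda>(p, ts, tb, v). a p * k v)"
    and integral_joint_no_info_mult:
      "(\<integral>(p, ts, tb, v). a p * k v \<partial>joint no_info \<sigma>) = (\<integral>p. a p \<partial>\<sigma> 0) * (\<integral>v. k v \<partial>\<mu>)"
proof -
  define k' where "k' v = k v * indicator V v" for v
  have k'_measurable[measurable]: "k' \<in> borel_measurable borel"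
    unfolding k'_def by measurable
  have "0 \<le> B"
    using k_bound[OF Inf_V_in_V] by linarith
  then have k'_bound: "\<bar>k' v\<bar> \<le> B" for v
    using k_bound[of v] by (auto simp: k'_def indicator_def)
  have h_bound: "\<bar>(\<lambda>(p, ts :: real, tb :: real, v). a p * k' v) x\<bar> \<le> B" for x
    using mult_mono[OF a_bound k'_bound] by (simp add: abs_mult split_beta')
  have AE_eq: "AE x in joint no_info \<sigma>. (\<lambda>(p, ts, tb, v). a p * k' v) x = (\<lambda>(p, ts, tb, v). a p * k v) x"
    using AE_joint_value_in_V[OF info_structure_no_info \<sigma>]
    by (auto simp: k'_def split_beta' elim!: eventually_mono)
  have "integrable (joint no_info \<sigma>) (\<lambda>(p, ts, tb, v). a p * k' v)"
    using h_bound
    by (intro integrable_AE_bounded[OF joint_in_prob_algebra[OF \<sigma> no_info_in_prob_algebra], where B=B])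
       (auto simp: split_beta' a)
  then show "integrable (joint no_info \<sigma>) (\<lambda>(p, ts, tb, v). a p * k v)"
    by (rule integrable_cong_AE_imp[OF _ measurable_joint[OF \<sigma> no_info_in_prob_algebra] AE_eq])
       measurable
  have "(\<integral>(p, ts, tb, v). a p * k v \<partial>joint no_info \<sigma>) = (\<integral>(p, ts, tb, v). a p * k' v \<partial>joint no_info \<sigma>)"
    using AE_eq
    by (intro integral_cong_AE measurable_joint[OF \<sigma> no_info_in_prob_algebra])
       (auto elim!: eventually_mono)
  also have "\<dots> = (\<integral>y. (\<integral>p. a p * k' (snd (snd y)) \<partial>\<sigma> (fst y)) \<partial>no_info)"
    by (subst integral_joint[OF \<sigma> no_info_in_prob_algebra _ h_bound]) (auto simp: split_beta' a)
  also have "\<dots> = (\<integral>v. (\<integral>p. a p \<partial>\<sigma> 0) * k' v \<partial>\<mu>)"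
    using measurable_prob_algebraD[OF \<sigma>] by (subst integral_no_info) (simp_all, measurable)
  also have "\<dots> = (\<integral>p. a p \<partial>\<sigma> 0) * (\<integral>v. k v \<partial>\<mu>)"
    using AE_\<mu>_in_V
    by (auto simp: k'_def sets_\<mu> intro!: arg_cong[where f="(*) _"] integral_cong_AE
        elim!: eventually_mono cong: measurable_cong_sets)
  finally show "(\<integral>(p, ts, tb, v). a p * k v \<partial>joint no_info \<sigma>) = (\<integral>p. a p \<partial>\<sigma> 0) * (\<integral>v. k v \<partial>\<mu>)" .
qed

context
  fixes a :: "real \<Rightarrow> real"
  assumes a[measurable]: "a \<in> borel_measurable borel" and a_nonneg: "\<And>p. 0 \<le> a p"
    and a_le_1: "\<And>p. a p \<le> 1"
begin

lemma
  shows integrable_no_info_cost_deviation: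
      "integrable (joint no_info \<sigma>) (\<lambda>(p, ts, tb, v). a p * (mean_cost - costV V c v))"
    and integral_no_info_cost_deviation:
      "(\<integral>(p, ts, tb, v). a p * (mean_cost - costV V c v) \<partial>joint no_info \<sigma>) = 0"
    and integrable_no_info_value_deviation:
      "integrable (joint no_info \<sigma>) (\<lambda>(p, ts, tb, v). a p * (v - mean_value))"
    and integral_no_info_value_deviation:
      "(\<integral>(p, ts, tb, v). a p * (v - mean_value) \<partial>joint no_info \<sigma>) = 0"
proof -
  have a_abs: "\<bar>a p\<bar> \<le> 1" for p
    using a_nonneg[of p] a_le_1[of p] by simp
  obtain Bc where Bc: "\<And>v. \<bar>costV V c v\<bar> \<le> Bc"
    using cost_bounded by blast
  obtain Bv where Bv: "\<And>v. v \<in> V \<Longrightarrow> \<bar>v\<bar> \<le> Bv"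
    using V_bounded by blast
  have cost_dev: "\<bar>mean_cost - costV V c v\<bar> \<le> \<bar>mean_cost\<bar> + Bc" for v
    using Bc[of v] by linarith
  have value_dev: "\<bar>v - mean_value\<bar> \<le> Bv + \<bar>mean_value\<bar>" if "v \<in> V" for v
    using Bv[OF that] by linarith
  show "integrable (joint no_info \<sigma>) (\<lambda>(p, ts, tb, v). a p * (mean_cost - costV V c v))"
    by (rule integrable_joint_no_info_mult[OF a a_abs _ cost_dev]) simp
  show "integrable (joint no_info \<sigma>) (\<lambda>(p, ts, tb, v). a p * (v - mean_value))"
    by (rule integrable_joint_no_info_mult[OF a a_abs _ value_dev]) simp_all
  show "(\<integral>(p, ts, tb, v). a p * (mean_cost - costV V c v) \<partial>joint no_info \<sigma>) = 0"
    using integral_const_minus_cost[of mean_cost]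
    by (subst integral_joint_no_info_mult[OF a a_abs _ cost_dev]) simp_all
  show "(\<integral>(p, ts, tb, v). a p * (v - mean_value) \<partial>joint no_info \<sigma>) = 0"
    using Bochner_Integration.integral_diff[OF integrable_value \<mu>.integrable_const[of mean_value]]
    by (subst integral_joint_no_info_mult[OF a a_abs _ value_dev])
       (simp_all add: mean_value_def \<mu>.prob_space)
qed

lemma seller_integrand_no_info_eq:
  "seller_integrand V c (\<lambda>(p, tb). a p) =
    (\<lambda>x. (\<lambda>(p, ts, tb, v). a p * (p - mean_cost)) x + (\<lambda>(p, ts, tb, v). a p * (mean_cost - costV V c v)) x)"
  by (auto simp: fun_eq_iff seller_integrand_def algebra_simps)

lemma seller_integrable_no_info_iff:
  "integrable (joint no_info \<sigma>) (seller_integrand V c (\<lambda>(p, tb). a p)) \<longleftrightarrow>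
    integrable (\<sigma> 0) (\<lambda>p. a p * (p - mean_cost))"
  unfolding seller_integrand_no_info_eq integrable_add_iff_left[OF integrable_no_info_cost_deviation]
  using integrable_joint_no_info_price_iff[of "\<lambda>p. a p * (p - mean_cost)"] by (simp add: split_beta')

context
  assumes price_integrable: "integrable (\<sigma> 0) (\<lambda>p. a p * (p - mean_cost))"
begin

lemma integrable_joint_no_info_price_term:
  "integrable (joint no_info \<sigma>) (\<lambda>(p, ts, tb, v). a p * (p - mean_cost))"
  using price_integrable integrable_joint_no_info_price_iff[of "\<lambda>p. a p * (p - mean_cost)"]
  by (simp add: split_beta')

lemma seller_payoff_no_info:
  "seller_payoff V c no_info \<sigma> (\<lambda>(p, tb). a p) = (\<integral>p. a p * (p - mean_cost) \<partial>\<sigma> 0)"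
  unfolding seller_payoff_def seller_integrand_no_info_eq
    Bochner_Integration.integral_add[OF integrable_joint_no_info_price_term integrable_no_info_cost_deviation]
  using integral_joint_no_info_price[of "\<lambda>p. a p * (p - mean_cost)"] integral_no_info_cost_deviation
  by (simp add: split_beta')

lemma buyer_payoff_no_info:
  "buyer_payoff no_info \<sigma> (\<lambda>(p, tb). a p) = (\<integral>p. a p * (mean_value - p) \<partial>\<sigma> 0)"
proof -
  have "integrable (\<sigma> 0) (\<lambda>p. a p * (mean_value - mean_cost))"
    using strategy_in_prob_algebra[OF \<sigma>, of 0] a_nonneg a_le_1
    by (intro integrable_AE_bounded[where B="\<bar>mean_value - mean_cost\<bar>"])
       (auto simp: abs_mult intro!: mult_left_le_one_le)
  from Bochner_Integration.integrable_diff[OF this price_integrable]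
  have "integrable (\<sigma> 0) (\<lambda>p. a p * (mean_value - p))"
    by (simp add: algebra_simps)
  then have price_term: "integrable (joint no_info \<sigma>) (\<lambda>(p, ts, tb, v). a p * (mean_value - p))"
    using integrable_joint_no_info_price_iff[of "\<lambda>p. a p * (mean_value - p)"] by (simp add: split_beta')
  have buyer_eq: "buyer_integrand (\<lambda>(p, tb). a p) =
      (\<lambda>x. (\<lambda>(p, ts :: real, tb :: real, v). a p * (mean_value - p)) x +
        (\<lambda>(p, ts, tb, v). a p * (v - mean_value)) x)"
    by (auto simp: fun_eq_iff buyer_integrand_def algebra_simps)
  show ?thesis
    unfolding buyer_payoff_def buyer_eq
      Bochner_Integration.integral_add[OF price_term integrable_no_info_value_deviation]
    using integral_joint_no_info_price[of "\<lambda>p. a p * (mean_value - p)"] integral_no_info_value_deviation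
    by (simp add: split_beta')
qed

end

end

end

end

context environment
begin

lemma belief_joint_no_info:
  assumes \<sigma>\<^sub>0: "\<sigma>\<^sub>0 \<in> space (prob_algebra borel)" and \<nu>[measurable]: "\<nu> \<in> borel \<rightarrow>\<^sub>M prob_algebra borel"
    and on_path: "AE p in \<sigma>\<^sub>0. \<nu> (p, 0) = \<mu>"
  shows "belief_joint no_info (\<lambda>_. \<sigma>\<^sub>0) \<nu> = joint no_info (\<lambda>_. \<sigma>\<^sub>0)"
proof -
  have \<sigma>: "(\<lambda>_ :: real. \<sigma>\<^sub>0) \<in> borel \<rightarrow>\<^sub>M prob_algebra borel"
    using \<sigma>\<^sub>0 by simp
  define X where "X = \<sigma>\<^sub>0 \<bind> (\<lambda>p. \<mu> \<bind> (\<lambda>w. return borel (p, 0 :: real, 0 :: real, w)))"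
  have X_kernel:
    "(\<lambda>p :: real. \<mu> \<bind> (\<lambda>w. return borel (p, 0 :: real, 0 :: real, w))) \<in> borel \<rightarrow>\<^sub>M prob_algebra borel"
    using \<mu>_in_prob_algebra by measurable
  have "belief_joint no_info (\<lambda>_. \<sigma>\<^sub>0) \<nu> = \<mu> \<bind> (\<lambda>v. belief_kernel (\<lambda>_. \<sigma>\<^sub>0) \<nu> (0, 0, v))"
    unfolding belief_joint_eq_bind_belief_kernel no_info_def
    by (rule bind_distr[OF measurable_no_info_embedding measurable_prob_algebraD])
       (auto simp: \<mu>.not_empty intro: measurable_belief_kernel[OF \<sigma> \<nu>])
  also have "\<dots> = \<mu> \<bind> (\<lambda>v. X)"
    unfolding belief_kernel_def X_def
    by (intro bind_cong refl bind_cong_AE'[OF \<sigma>\<^sub>0 _ X_kernel])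
       (use on_path in \<open>auto elim!: eventually_mono\<close>)
  also have "\<dots> = X"
    using prob_space_bind'[OF \<sigma>\<^sub>0 X_kernel]
    by (intro bind_const'[OF prob_space_\<mu>]) (simp add: X_def prob_space_imp_subprob_space)
  also have "\<dots> = \<mu> \<bind> (\<lambda>v. \<sigma>\<^sub>0 \<bind> (\<lambda>p. return borel (p, 0, 0, v)))"
  proof -
    interpret pair_prob_space \<mu> \<sigma>\<^sub>0
      using \<sigma>\<^sub>0 prob_space_\<mu>
      by (simp add: pair_prob_space_def pair_sigma_finite_def space_prob_algebra prob_space_imp_sigma_finite)
    have "(\<lambda>(v, p). return borel (p, 0 :: real, 0 :: real, v)) \<in> \<mu> \<Otimes>\<^sub>M \<sigma>\<^sub>0 \<rightarrow>\<^sub>M subprob_algebra borel"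
      using sets_\<mu> \<sigma>\<^sub>0 by (simp add: space_prob_algebra cong: measurable_cong_sets)
    from bind_rotate[OF this] show ?thesis
      by (simp add: X_def)
  qed
  also have "\<dots> = joint no_info (\<lambda>_. \<sigma>\<^sub>0)"
    unfolding joint_eq_bind_price_kernel no_info_def
    by (subst bind_distr[OF measurable_no_info_embedding
        measurable_prob_algebraD[OF measurable_price_kernel[OF \<sigma>]]])
       (auto simp: \<mu>.not_empty price_kernel_def)
  finally show ?thesis .
qed

context
  fixes \<sigma>\<^sub>0 :: "real measure" and a :: "real \<Rightarrow> real" and A :: "real set"
  assumes \<sigma>\<^sub>0: "\<sigma>\<^sub>0 \<in> space (prob_algebra borel)"
    and A[measurable]: "A \<in> sets borel" and on_path: "AE p in \<sigma>\<^sub>0. p \<in> A"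
    and a[measurable]: "a \<in> borel_measurable borel" and a_nonneg: "\<And>p. 0 \<le> a p" and a_le_1: "\<And>p. a p \<le> 1"
    and accept_on_path: "\<And>p. p \<in> A \<Longrightarrow> p < mean_value \<Longrightarrow> a p = 1"
    and reject_on_path: "\<And>p. p \<in> A \<Longrightarrow> mean_value < p \<Longrightarrow> a p = 0"
    and accept_off_path: "\<And>p. p \<notin> A \<Longrightarrow> p < Inf V \<Longrightarrow> a p = 1"
    and reject_off_path: "\<And>p. p \<notin> A \<Longrightarrow> Inf V < p \<Longrightarrow> a p = 0"
    and price_integrable: "integrable \<sigma>\<^sub>0 (\<lambda>p. a p * (p - mean_cost))"
    and optimal: "\<And>p. a p * (p - mean_cost) \<le> (\<integral>p. a p * (p - mean_cost) \<partial>\<sigma>\<^sub>0)"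
begin

lemma constant_strategy_measurable: "(\<lambda>_ :: real. \<sigma>\<^sub>0) \<in> borel \<rightarrow>\<^sub>M prob_algebra borel"
  using \<sigma>\<^sub>0 by simp

lemma wPBE_no_info:
  "wPBE V c no_info (\<lambda>_. \<sigma>\<^sub>0) (\<lambda>(p, tb). a p) (\<lambda>(p, tb). if p \<in> A then \<mu> else return borel (Inf V))"
  (is "wPBE V c no_info ?\<sigma> ?\<alpha> ?\<nu>")
proof -
  have \<nu>: "?\<nu> \<in> borel \<rightarrow>\<^sub>M prob_algebra borel"
    using \<mu>_in_prob_algebra by (simp add: split_beta' space_prob_algebra prob_space_return)
  have \<nu>_on_V: "measure (?\<nu> x) V = 1" for x
    using AE_\<mu>_in_V Inf_V_in_V by (auto simp: split_beta' \<mu>.AE_in_set_eq_1 measure_return sets_\<mu>)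
  have best: "seller_payoff V c no_info \<sigma>' ?\<alpha> \<le> seller_payoff V c no_info ?\<sigma> ?\<alpha>"
    if \<sigma>': "seller_strategy \<sigma>'" "integrable (joint no_info \<sigma>') (seller_integrand V c ?\<alpha>)" for \<sigma>'
  proof -
    have \<sigma>'_measurable: "\<sigma>' \<in> borel \<rightarrow>\<^sub>M prob_algebra borel"
      using \<sigma>' by (simp add: seller_strategy_def)
    then interpret \<sigma>'_0: prob_space "\<sigma>' 0"
      using strategy_in_prob_algebra[OF \<sigma>'_measurable, of 0] by (simp add: space_prob_algebra)
    have int': "integrable (\<sigma>' 0) (\<lambda>p. a p * (p - mean_cost))"
      using \<sigma>'(2) seller_integrable_no_info_iff[OF \<sigma>'_measurable a a_nonneg a_le_1] by simp
    have "seller_payoff V c no_info \<sigma>' ?\<alpha> = (\<integral>p. a p * (p - mean_cost) \<partial>\<sigma>' 0)"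
      by (rule seller_payoff_no_info[OF \<sigma>'_measurable a a_nonneg a_le_1 int'])
    also have "\<dots> \<le> (\<integral>p. (\<integral>q. a q * (q - mean_cost) \<partial>\<sigma>\<^sub>0) \<partial>\<sigma>' 0)"
      by (intro integral_mono[OF int'] optimal) simp
    also have "\<dots> = seller_payoff V c no_info ?\<sigma> ?\<alpha>"
      using seller_payoff_no_info[OF constant_strategy_measurable a a_nonneg a_le_1] price_integrable
      by (simp add: \<sigma>'_0.prob_space)
    finally show ?thesis .
  qed
  have "belief_joint no_info ?\<sigma> ?\<nu> = joint no_info ?\<sigma>"
    using on_path by (intro belief_joint_no_info[OF \<sigma>\<^sub>0 \<nu>]) (simp add: eventually_mono)
  then show ?thesis
    unfolding wPBE_def
    using constant_strategy_measurable \<nu> \<nu>_on_V best a_nonneg a_le_1 price_integrable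
      seller_integrable_no_info_iff[OF constant_strategy_measurable a a_nonneg a_le_1]
      accept_on_path reject_on_path accept_off_path reject_off_path
    by (auto simp: seller_strategy_def mean_value_def integral_return split_beta')
qed

lemma payoffs_in_eq_payoffs_no_info:
  "((\<integral>p. a p * (mean_value - p) \<partial>\<sigma>\<^sub>0), (\<integral>p. a p * (p - mean_cost) \<partial>\<sigma>\<^sub>0)) \<in> eq_payoffs V c no_info"
  using wPBE_no_info
    seller_payoff_no_info[OF constant_strategy_measurable a a_nonneg a_le_1 price_integrable]
    buyer_payoff_no_info[OF constant_strategy_measurable a a_nonneg a_le_1 price_integrable]
  unfolding eq_payoffs_def by force

end

definition supporting_acceptance :: "real \<Rightarrow> real \<Rightarrow> real" where
  "supporting_acceptance ps p =
    (if p = mean_value then ps / surplus \<mu> V c else if p \<le> Inf V \<or> p = mean_cost + ps then 1 else 0)"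

lemma measurable_supporting_acceptance[measurable]: "supporting_acceptance ps \<in> borel_measurable borel"
  unfolding supporting_acceptance_def by measurable

context
  fixes ps :: real
  assumes ps_floor: "seller_floor \<mu> V c \<le> ps" and ps_le_surplus: "ps \<le> surplus \<mu> V c"
begin

lemma ps_nonneg: "0 \<le> ps" and Inf_V_minus_mean_cost_le_ps: "Inf V - mean_cost \<le> ps"
  using ps_floor by (simp_all add: seller_floor_def mean_cost_def)

lemma supporting_acceptance_at_mean_value:
  "supporting_acceptance ps mean_value = ps / surplus \<mu> V c"
  "ps / surplus \<mu> V c * surplus \<mu> V c = ps"
  "0 \<le> ps / surplus \<mu> V c" "ps / surplus \<mu> V c \<le> 1"
  \<comment> \<open>If the surplus is 0 then so is ps, and ps / 0 = 0.\<close>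
  using ps_nonneg ps_le_surplus by (auto simp: supporting_acceptance_def divide_le_eq_1)

lemma supporting_acceptance_nonneg: "0 \<le> supporting_acceptance ps p"
  and supporting_acceptance_le_1: "supporting_acceptance ps p \<le> 1"
  using supporting_acceptance_at_mean_value by (simp_all add: supporting_acceptance_def)

lemma supporting_acceptance_revenue_le: "supporting_acceptance ps p * (p - mean_cost) \<le> ps"
  using supporting_acceptance_at_mean_value(2) ps_nonneg Inf_V_minus_mean_cost_le_ps
  by (auto simp: supporting_acceptance_def surplus_eq)

lemma supporting_acceptance_revenue:
  "supporting_acceptance ps mean_value * (mean_value - mean_cost) = ps"
  "supporting_acceptance ps (mean_cost + ps) * ps = ps"
  "supporting_acceptance ps (mean_cost + ps) * (mean_value - (mean_cost + ps)) = surplus \<mu> V c - ps"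
  using supporting_acceptance_at_mean_value ps_le_surplus
  by (auto simp: supporting_acceptance_def surplus_eq)

lemma two_point_payoffs_in_eq_payoffs:
  assumes l: "0 \<le> l" "l \<le> 1"
  shows "(l * (surplus \<mu> V c - ps), ps) \<in> eq_payoffs V c no_info"
proof -
  define p\<^sub>1 where "p\<^sub>1 = mean_cost + ps"
  define \<sigma>\<^sub>0 where "\<sigma>\<^sub>0 = two_point l p\<^sub>1 mean_value"
  let ?a = "supporting_acceptance ps"
  have seller_value: "(\<integral>p. ?a p * (p - mean_cost) \<partial>\<sigma>\<^sub>0) = ps"
    using l supporting_acceptance_revenue by (simp add: \<sigma>\<^sub>0_def p\<^sub>1_def integral_two_point algebra_simps)
  have "((\<integral>p. ?a p * (mean_value - p) \<partial>\<sigma>\<^sub>0), (\<integral>p. ?a p * (p - mean_cost) \<partial>\<sigma>\<^sub>0)) \<in> eq_payoffs V c no_info"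
  proof (rule payoffs_in_eq_payoffs_no_info[where A="{p\<^sub>1, mean_value}", OF _ _ _
        measurable_supporting_acceptance supporting_acceptance_nonneg supporting_acceptance_le_1])
    show "\<sigma>\<^sub>0 \<in> space (prob_algebra borel)"
      unfolding \<sigma>\<^sub>0_def by (rule two_point_in_prob_algebra[OF l])
    show "AE p in \<sigma>\<^sub>0. p \<in> {p\<^sub>1, mean_value}"
      unfolding \<sigma>\<^sub>0_def using AE_two_point[OF l] by simp
    show "integrable \<sigma>\<^sub>0 (\<lambda>p. ?a p * (p - mean_cost))"
      using l by (simp add: \<sigma>\<^sub>0_def integrable_two_point)
    show "?a p * (p - mean_cost) \<le> (\<integral>p. ?a p * (p - mean_cost) \<partial>\<sigma>\<^sub>0)" for p
      using supporting_acceptance_revenue_le by (simp add: seller_value)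
  qed (use supporting_acceptance_at_mean_value ps_le_surplus in
        \<open>auto simp: supporting_acceptance_def p\<^sub>1_def surplus_eq\<close>)
  moreover have "(\<integral>p. ?a p * (mean_value - p) \<partial>\<sigma>\<^sub>0) = l * (surplus \<mu> V c - ps)"
    using l supporting_acceptance_revenue by (simp add: \<sigma>\<^sub>0_def p\<^sub>1_def integral_two_point)
  ultimately show ?thesis
    by (simp add: seller_value)
qed

end

lemma target_set_subset_eq_payoffs_no_info: "target_set \<mu> V c \<subseteq> eq_payoffs V c no_info"
proof clarify
  fix pb ps assume "(pb, ps) \<in> target_set \<mu> V c"
  then have pb: "0 \<le> pb" "pb + ps \<le> surplus \<mu> V c" and ps: "seller_floor \<mu> V c \<le> ps"
    by (simp_all add: target_set_def)
  define l where "l = pb / (surplus \<mu> V c - ps)"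
  \<comment> \<open>If ps is the whole surplus then pb = 0, and l = 0 by the convention x / 0 = 0.\<close>
  have "0 \<le> l" "l \<le> 1" "l * (surplus \<mu> V c - ps) = pb"
    using pb by (auto simp: l_def divide_le_eq_1)
  with two_point_payoffs_in_eq_payoffs[OF ps _ \<open>0 \<le> l\<close> \<open>l \<le> 1\<close>] pb
  show "(pb, ps) \<in> eq_payoffs V c no_info"
    by simp
qed

lemma eq_payoffs_subset_target_set:
  fixes P :: "('ts::second_countable_topology \<times> 'tb::second_countable_topology \<times> real) measure"
  assumes "info_structure \<mu> P"
  shows "eq_payoffs V c P \<subseteq> target_set \<mu> V c"
  unfolding eq_payoffs_def
proof clarify
  fix \<sigma> \<alpha> \<nu> assume "wPBE V c P \<sigma> \<alpha> \<nu>"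
  then interpret equilibrium V \<mu> c P \<sigma> \<alpha> \<nu>
    using assms by (intro equilibrium.intro equilibrium_axioms.intro environment_axioms)
  show "(buyer_payoff P \<sigma> \<alpha>, seller_payoff V c P \<sigma> \<alpha>) \<in> target_set \<mu> V c"
    by (rule payoffs_in_target_set)
qed

lemma all_eq_payoffs_eq_target_set: "all_eq_payoffs \<mu> V c = target_set \<mu> V c"
  using eq_payoffs_subset_target_set target_set_subset_eq_payoffs_no_info info_structure_no_info
  unfolding all_eq_payoffs_def by blast

end

theorem theorem1:
  fixes V :: "real set" and \<mu> :: "real measure" and c :: "real \<Rightarrow> real"
  assumes "prob_space \<mu>" and "sets \<mu> = sets borel"
    and "compact V" and "V \<noteq> {}" and "Inf V < Sup V"
    and "support_of \<mu> = V"
    and "continuous_on V c"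
    and "\<forall>v\<in>V. v - c v \<ge> 0"
    and "surplus \<mu> V c > 0"
  shows "all_eq_payoffs \<mu> V c = target_set \<mu> V c \<and>
    (\<forall>P :: ('ts::polish_space \<times> 'tb::polish_space \<times> real) measure.
       info_structure \<mu> P \<longrightarrow> eq_payoffs V c P \<subseteq> target_set \<mu> V c)"
proof -
  interpret environment V \<mu> c
    using assms by (simp add: environment_def)
  show ?thesis
    using all_eq_payoffs_eq_target_set eq_payoffs_subset_target_set by blast
qed

end
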